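(* Let $n\ge 3$ and $V=\{d\in\{0,1\}^n: d_n=0\}$. For $\epsilon\in\{\text{even},\text{odd}\}$ let $V_\epsilon\subseteq V$ be the words whose number of digits $1$ has parity $\epsilon$, and let $\Gamma_\epsilon$ be the directed graph on $V_\epsilon$ whose arrows are: (i) every arrow of $L_n$ between two elements of $V_\epsilon$, and (ii) the additional arrows $d_1\dots d_{n-3}\,000\to d_1\dots d_{n-3}\,110$ whenever both ends lie in $V_\epsilon$. Then $V=V_{\text{even}}\sqcup V_{\text{odd}}$, every arrow of $L_n$ between elements of $V$ joins words of the same parity, and for each $\epsilon$ the map $d_1\dots d_{n-2}d_{n-1}0\mapsto d_1\dots d_{n-2}$ is an isomorphism of directed graphs $\Gamma_\epsilon\to L_{n-2}$.
   Context: For $m\ge 1$, $L_m$ is the directed graph on $\{0,1\}^m$ with arrows $u\,01\,v\to u\,10\,v$ (binary words $u,v$, $|u|+|v|=m-2$) and $u0\to u1$ ($|u|=m-1$); it is isomorphic (via Lascoux–Schützenberger notation) to the regular Hasse diagram of the Lagrangian Grassmannian of rank $m$. $V$ corresponds to the singular Hasse diagram $W^{\mathfrak{p},\{\alpha_n\}}$, and the arrows (ii) correspond to non-standard invariant differential operators constructed via the Penrose transform. *)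

theory Defs
  imports Main
begin

text \<open>Binary words are lists of booleans (False = 0, True = 1).\<close>

definition L_verts :: "nat \<Rightarrow> bool list set" where
  "L_verts m = {w. length w = m}"

definition L_edges :: "nat \<Rightarrow> (bool list \<times> bool list) set" where
  "L_edges m =
     {(u @ [False, True] @ v, u @ [True, False] @ v) | u v. length u + length v + 2 = m}
   \<union> {(u @ [False], u @ [True]) | u. length u + 1 = m}"

definition ones :: "bool list \<Rightarrow> nat" where
  "ones w = length (filter id w)"

definition Vset :: "nat \<Rightarrow> bool list set" where
  "Vset n = {w. length w = n \<and> last w = False}"

definition V_par :: "nat \<Rightarrow> bool \<Rightarrow> bool list set" where
  "V_par n b = {w \<in> Vset n. odd (ones w) = b}"

definition Gamma_edges :: "nat \<Rightarrow> bool \<Rightarrow> (bool list \<times> bool list) set" where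
  "Gamma_edges n b =
     {(x, y). x \<in> V_par n b \<and> y \<in> V_par n b \<and>
        ((x, y) \<in> L_edges n \<or>
         (\<exists>u. length u + 3 = n \<and> x = u @ [False, False, False] \<and> y = u @ [True, True, False]))}"

definition digraph_iso ::
  "('a \<Rightarrow> 'b) \<Rightarrow> 'a set \<Rightarrow> ('a \<times> 'a) set \<Rightarrow> 'b set \<Rightarrow> ('b \<times> 'b) set \<Rightarrow> bool" where
  "digraph_iso f A E B F \<longleftrightarrow> bij_betw f A B \<and>
     (\<forall>x\<in>A. \<forall>y\<in>A. (x, y) \<in> E \<longleftrightarrow> (f x, f y) \<in> F)"

end

theory Submission imports Defs begin

text \<open>On \<open>V\<^sub>\<epsilon>\<close> the last digit of a word is 0 and the one before it is determined by the
  parity \<open>\<epsilon>\<close>, so dropping both is a bijection onto words of length \<open>n - 2\<close> with inverse \<open>lift\<close>.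
  An arrow \<open>p \<rightarrow> q\<close> of \<open>L\<^sub>n\<^sub>-\<^sub>2\<close> is either a swap \<open>01 \<mapsto> 10\<close>, which preserves the number of
  ones and so lifts to the same swap in \<open>L\<^sub>n\<close>, or a flip \<open>u0 \<mapsto> u1\<close> of the last digit, which
  changes the parity, so that the lifted arrow is either \<open>u010 \<rightarrow> u100\<close> (a swap of \<open>L\<^sub>n\<close>) or
  \<open>u000 \<rightarrow> u110\<close> (an extra arrow of \<open>\<Gamma>\<^sub>\<epsilon>\<close>). A flip of \<open>L\<^sub>n\<close> ends in digit 1, hence never
  joins two words of \<open>V\<close>, and swaps preserve parity.\<close>

definition L_swaps :: "nat \<Rightarrow> (bool list \<times> bool list) set" where
  "L_swaps m = {(u @ [False, True] @ v, u @ [True, False] @ v) | u v. length u + length v + 2 = m}"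

definition L_flips :: "nat \<Rightarrow> (bool list \<times> bool list) set" where
  "L_flips m = {(u @ [False], u @ [True]) | u. length u + 1 = m}"

lemma L_edges_eq: "L_edges m = L_swaps m \<union> L_flips m"
  unfolding L_edges_def L_swaps_def L_flips_def by simp

lemma ones_Nil [simp]: "ones [] = 0"
  by (simp add: ones_def)

lemma ones_Cons [simp]: "ones (x # xs) = (if x then 1 else 0) + ones xs"
  by (simp add: ones_def)

lemma ones_append [simp]: "ones (xs @ ys) = ones xs + ones ys"
  by (simp add: ones_def)

lemma ones_eq_if_L_swaps: "(x, y) \<in> L_swaps m \<Longrightarrow> ones x = ones y"
  unfolding L_swaps_def by auto

lemma ones_Suc_if_L_flips: "(x, y) \<in> L_flips m \<Longrightarrow> ones y = Suc (ones x)"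
  unfolding L_flips_def by auto

lemma L_edges_last_False_imp_L_swaps:
  "(x, y) \<in> L_edges m \<Longrightarrow> last y = False \<Longrightarrow> (x, y) \<in> L_swaps m"
  unfolding L_edges_eq L_flips_def by auto

lemma L_edges_append_two_iff:
  assumes "length p = m" "length q = m"
  shows "(p @ [a, False], q @ [c, False]) \<in> L_edges (m + 2) \<longleftrightarrow>
    (a = c \<and> (p, q) \<in> L_swaps m) \<or> ((p, q) \<in> L_flips m \<and> a \<and> \<not> c)"
proof
  assume "(p @ [a, False], q @ [c, False]) \<in> L_edges (m + 2)"
  then obtain u v where uv: "p @ [a, False] = u @ [False, True] @ v" "q @ [c, False] = u @ [True, False] @ v"
    "length u + length v = m"
    unfolding L_edges_eq L_flips_def L_swaps_def by auto
  show "(a = c \<and> (p, q) \<in> L_swaps m) \<or> ((p, q) \<in> L_flips m \<and> a \<and> \<not> c)"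
  proof (cases v rule: rev_exhaust)
    case Nil
    then show ?thesis using uv by auto
  next
    case (snoc v' z)
    show ?thesis
    proof (cases v' rule: rev_exhaust)
      case Nil
      then have "p = u @ [False]" "q = u @ [True]" "a" "\<not> c"
        using uv \<open>v = v' @ [z]\<close> by auto
      then show ?thesis using assms unfolding L_flips_def by auto
    next
      case (snoc v'' z')
      then have "p = u @ [False, True] @ v''" "q = u @ [True, False] @ v''" "a = c"
        using uv \<open>v = v' @ [z]\<close> by auto
      then show ?thesis using assms unfolding L_swaps_def by auto
    qed
  qed
next
  assume "(a = c \<and> (p, q) \<in> L_swaps m) \<or> ((p, q) \<in> L_flips m \<and> a \<and> \<not> c)"
  then show "(p @ [a, False], q @ [c, False]) \<in> L_edges (m + 2)"
  proof
    assume "a = c \<and> (p, q) \<in> L_swaps m"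
    then obtain u v where "p = u @ [False, True] @ v" "q = u @ [True, False] @ v" "a = c"
      "length u + length v + 2 = m"
      unfolding L_swaps_def by auto
    then show ?thesis unfolding L_edges_def
      by (intro UnI1 CollectI exI[of _ u] exI[of _ "v @ [a, False]"]) auto
  next
    assume "(p, q) \<in> L_flips m \<and> a \<and> \<not> c"
    then obtain u where "p = u @ [False]" "q = u @ [True]" "a" "\<not> c"
      unfolding L_flips_def by auto
    then show ?thesis using assms unfolding L_edges_def
      by (intro UnI1 CollectI exI[of _ u] exI[of _ "[False]"]) auto
  qed
qed

lemma extra_edge_append_two_iff:
  assumes "length p = m" "length q = m"
  shows "(\<exists>u. length u + 3 = m + 2 \<and> p @ [a, False] = u @ [False, False, False]
                                    \<and> q @ [c, False] = u @ [True, True, False]) \<longleftrightarrow>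
    ((p, q) \<in> L_flips m \<and> \<not> a \<and> c)"
proof
  assume "\<exists>u. length u + 3 = m + 2 \<and> p @ [a, False] = u @ [False, False, False]
                                    \<and> q @ [c, False] = u @ [True, True, False]"
  then obtain u where "length u + 1 = m" "p @ [a] = u @ [False, False]" "q @ [c] = u @ [True, True]"
    by auto
  then show "(p, q) \<in> L_flips m \<and> \<not> a \<and> c"
    unfolding L_flips_def by (auto simp flip: append_assoc)
next
  assume "(p, q) \<in> L_flips m \<and> \<not> a \<and> c"
  then show "\<exists>u. length u + 3 = m + 2 \<and> p @ [a, False] = u @ [False, False, False]
                                    \<and> q @ [c, False] = u @ [True, True, False]"
    unfolding L_flips_def by auto
qed

definition lift :: "bool \<Rightarrow> bool list \<Rightarrow> bool list" where
  "lift b p = p @ [odd (ones p) \<noteq> b, False]"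

lemma lift_in_V_par: "length p + 2 = n \<Longrightarrow> lift b p \<in> V_par n b"
  unfolding lift_def V_par_def Vset_def by auto

lemma take_lift: "length p + 2 = n \<Longrightarrow> take (n - 2) (lift b p) = p"
  unfolding lift_def by auto

lemma lift_take_V_par:
  assumes "w \<in> V_par n b" "n \<ge> 2"
  shows "lift b (take (n - 2) w) = w"
proof -
  have w: "length w = n" "last w = False" "odd (ones w) = b"
    using assms(1) unfolding V_par_def Vset_def by auto
  define p where "p = take (n - 2) w"
  have "length (drop (n - 2) w) = 2"
    using w(1) assms(2) by simp
  then obtain x y where "drop (n - 2) w = [x, y]"
    by (metis One_nat_def Suc_1 length_0_conv length_Suc_conv)
  then have "w = p @ [x, y]"
    unfolding p_def by (metis append_take_drop_id)
  with w(2,3) have "w = p @ [x, False]" "x = (odd (ones p) \<noteq> b)"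
    by (cases x; simp)+
  then show ?thesis
    unfolding lift_def p_def[symmetric] by simp
qed

lemma bij_betw_take_V_par:
  assumes "n \<ge> 2"
  shows "bij_betw (take (n - 2)) (V_par n b) (L_verts (n - 2))"
proof (rule bij_betw_byWitness[where f' = "lift b"])
  show "\<forall>w\<in>V_par n b. lift b (take (n - 2) w) = w"
    using lift_take_V_par assms by blast
  show "\<forall>p\<in>L_verts (n - 2). take (n - 2) (lift b p) = p"
    using take_lift assms unfolding L_verts_def by auto
  show "take (n - 2) ` V_par n b \<subseteq> L_verts (n - 2)"
    unfolding L_verts_def V_par_def Vset_def by auto
  show "lift b ` L_verts (n - 2) \<subseteq> V_par n b"
    using lift_in_V_par assms unfolding L_verts_def by auto
qed

lemma Gamma_edges_lift_iff:
  assumes "length p = m" "length q = m"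
  shows "(lift b p, lift b q) \<in> Gamma_edges (m + 2) b \<longleftrightarrow> (p, q) \<in> L_edges m"
proof -
  define a where "a = (odd (ones p) \<noteq> b)"
  define c where "c = (odd (ones q) \<noteq> b)"
  have "(p, q) \<in> L_swaps m \<Longrightarrow> a = c"
    using ones_eq_if_L_swaps unfolding a_def c_def by metis
  moreover have "(p, q) \<in> L_flips m \<Longrightarrow> a \<noteq> c"
    using ones_Suc_if_L_flips unfolding a_def c_def by fastforce
  moreover have "(lift b p, lift b q) \<in> Gamma_edges (m + 2) b \<longleftrightarrow>
      (p @ [a, False], q @ [c, False]) \<in> L_edges (m + 2) \<or>
      (\<exists>u. length u + 3 = m + 2 \<and> p @ [a, False] = u @ [False, False, False]
                              \<and> q @ [c, False] = u @ [True, True, False])"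
    using lift_in_V_par[of p "m + 2" b] lift_in_V_par[of q "m + 2" b] assms
    unfolding Gamma_edges_def lift_def a_def c_def by simp
  ultimately show ?thesis
    unfolding L_edges_append_two_iff[OF assms] extra_edge_append_two_iff[OF assms]
      L_edges_eq[of m] by blast
qed

lemma digraph_iso_take_V_par:
  assumes "n \<ge> 2"
  shows "digraph_iso (take (n - 2)) (V_par n b) (Gamma_edges n b) (L_verts (n - 2)) (L_edges (n - 2))"
proof -
  define m where "m = n - 2"
  have n: "n = m + 2"
    using assms unfolding m_def by simp
  have "(x, y) \<in> Gamma_edges n b \<longleftrightarrow> (take m x, take m y) \<in> L_edges m"
    if "x \<in> V_par n b" "y \<in> V_par n b" for x y
  proof -
    have "length (take m x) = m" "length (take m y) = m"
      using that n unfolding V_par_def Vset_def by auto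
    from Gamma_edges_lift_iff[OF this, of b] show ?thesis
      using lift_take_V_par[OF that(1) assms] lift_take_V_par[OF that(2) assms]
      unfolding m_def[symmetric] n by simp
  qed
  then show ?thesis
    unfolding digraph_iso_def m_def using bij_betw_take_V_par[OF assms] by simp
qed

theorem mainTheorem13:
  fixes n :: nat
  assumes "n \<ge> 3"
  shows "Vset n = V_par n False \<union> V_par n True
    \<and> V_par n False \<inter> V_par n True = {}
    \<and> (\<forall>x y. x \<in> Vset n \<longrightarrow> y \<in> Vset n \<longrightarrow> (x, y) \<in> L_edges n \<longrightarrow>
          odd (ones x) = odd (ones y))
    \<and> (\<forall>b. digraph_iso (\<lambda>w. take (n - 2) w) (V_par n b) (Gamma_edges n b)
                       (L_verts (n - 2)) (L_edges (n - 2)))"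
proof (intro conjI allI impI)
  show "Vset n = V_par n False \<union> V_par n True" "V_par n False \<inter> V_par n True = {}"
    unfolding V_par_def by auto
next
  fix x y
  assume "y \<in> Vset n" "(x, y) \<in> L_edges n"
  then have "(x, y) \<in> L_swaps n"
    using L_edges_last_False_imp_L_swaps unfolding Vset_def by blast
  then show "odd (ones x) = odd (ones y)"
    using ones_eq_if_L_swaps by metis
next
  fix b
  show "digraph_iso (\<lambda>w. take (n - 2) w) (V_par n b) (Gamma_edges n b)
      (L_verts (n - 2)) (L_edges (n - 2))"
    using digraph_iso_take_V_par assms by simp
qed

end
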